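(* Let $\mathcal{G}$ be a network with non-monitor set $N$ and set of measurement paths $P$, and let $k\ge1$. Let $S'(k):=\{v\in N: v\text{ is }k\text{-identifiable}\}$ and let $S^*(k)$ be a maximum-cardinality $k$-identifiable subset of $N$. Then $S'(k)=S^*(k)$.
   Context: $\mathcal{G}$ is a finite connected undirected graph whose node set is partitioned into monitors $M$ and non-monitors $N$; $P$ is an arbitrary set of measurement paths. A failure set is any $F\subseteq N$; a path fails iff it traverses a node of $F$. $P_F$ is the set of paths in $P$ traversing at least one node of $F$; $F_1,F_2$ are distinguishable iff $P_{F_1}\ne P_{F_2}$. For $S\subseteq N$, $S$ is $k$-identifiable if any two failure sets $F_1,F_2$ with $|F_1|,|F_2|\le k$ and $F_1\cap S\ne F_2\cap S$ are distinguishable; a node $v$ is $k$-identifiable if $\{v\}$ is. *)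

theory Defs
  imports Main
begin

definition connected_graph :: "'a set \<Rightarrow> ('a \<Rightarrow> 'a \<Rightarrow> bool) \<Rightarrow> bool" where
  "connected_graph V E \<longleftrightarrow> finite V \<and> V \<noteq> {} \<and>
     (\<forall>u v. E u v \<longrightarrow> u \<in> V \<and> v \<in> V) \<and>
     (\<forall>u v. E u v \<longrightarrow> E v u) \<and> (\<forall>v. \<not> E v v) \<and>
     (\<forall>u\<in>V. \<forall>v\<in>V. E\<^sup>*\<^sup>* u v)"

definition is_path :: "'a set \<Rightarrow> ('a \<Rightarrow> 'a \<Rightarrow> bool) \<Rightarrow> 'a list \<Rightarrow> bool" where
  "is_path V E p \<longleftrightarrow> p \<noteq> [] \<and> distinct p \<and> set p \<subseteq> V \<and>
     (\<forall>i. Suc i < length p \<longrightarrow> E (p ! i) (p ! Suc i))"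

definition measurement_path :: "'a set \<Rightarrow> ('a \<Rightarrow> 'a \<Rightarrow> bool) \<Rightarrow> 'a set \<Rightarrow> 'a list \<Rightarrow> bool" where
  "measurement_path V E M p \<longleftrightarrow> is_path V E p \<and> hd p \<in> M \<and> last p \<in> M"

definition failed_paths :: "'a list set \<Rightarrow> 'a set \<Rightarrow> 'a list set" where
  "failed_paths P F = {p \<in> P. \<exists>v\<in>F. v \<in> set p}"

definition distinguishable :: "'a list set \<Rightarrow> 'a set \<Rightarrow> 'a set \<Rightarrow> bool" where
  "distinguishable P F1 F2 \<longleftrightarrow> failed_paths P F1 \<noteq> failed_paths P F2"

definition k_identifiable :: "'a list set \<Rightarrow> 'a set \<Rightarrow> nat \<Rightarrow> 'a set \<Rightarrow> bool" where
  "k_identifiable P N k S \<longleftrightarrow>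
     (\<forall>F1 F2. F1 \<subseteq> N \<longrightarrow> F2 \<subseteq> N \<longrightarrow> card F1 \<le> k \<longrightarrow> card F2 \<le> k \<longrightarrow>
        F1 \<inter> S \<noteq> F2 \<inter> S \<longrightarrow> distinguishable P F1 F2)"

end

theory Submission
  imports Defs
begin

text \<open>Identifiability of a set is the conjunction of the identifiability of its nodes: two failure
  sets differing on S differ on some node of S. Hence the k-identifiable nodes form the unique
  largest k-identifiable subset of N, which is then the maximum-cardinality one.\<close>

lemma k_identifiable_iff_singletons:
  "k_identifiable P N k S \<longleftrightarrow> (\<forall>v\<in>S. k_identifiable P N k {v})"
proof
  assume "k_identifiable P N k S"
  then show "\<forall>v\<in>S. k_identifiable P N k {v}"
    unfolding k_identifiable_def by blast
next
  assume nodes: "\<forall>v\<in>S. k_identifiable P N k {v}"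
  show "k_identifiable P N k S"
    unfolding k_identifiable_def
  proof (intro allI impI)
    fix F1 F2
    assume F: "F1 \<subseteq> N" "F2 \<subseteq> N" "card F1 \<le> k" "card F2 \<le> k" "F1 \<inter> S \<noteq> F2 \<inter> S"
    then obtain v where "v \<in> S" "F1 \<inter> {v} \<noteq> F2 \<inter> {v}" by blast
    with nodes F(1-4) show "distinguishable P F1 F2"
      unfolding k_identifiable_def by blast
  qed
qed

theorem proposition2:
  fixes V M N :: "'a set" and E :: "'a \<Rightarrow> 'a \<Rightarrow> bool"
    and P :: "'a list set" and k :: nat and Sstar :: "'a set"
  assumes "connected_graph V E"
    and "M \<union> N = V" and "M \<inter> N = {}"
    and "\<forall>p\<in>P. measurement_path V E M p"
    and "k \<ge> 1"
    and "Sstar \<subseteq> N" and "k_identifiable P N k Sstar"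
    and "\<forall>S. S \<subseteq> N \<longrightarrow> k_identifiable P N k S \<longrightarrow> card S \<le> card Sstar"
  shows "{v \<in> N. k_identifiable P N k {v}} = Sstar"
proof -
  let ?S' = "{v \<in> N. k_identifiable P N k {v}}"
  have "finite N"
    using assms(1,2) unfolding connected_graph_def by (metis finite_Un)
  then have "finite ?S'" by simp
  moreover have "Sstar \<subseteq> ?S'"
    using assms(6,7) k_identifiable_iff_singletons[of P N k Sstar] by blast
  moreover have "card ?S' \<le> card Sstar"
  proof -
    have "k_identifiable P N k ?S'"
      using k_identifiable_iff_singletons[of P N k ?S'] by blast
    then show ?thesis
      using assms(8) by simp
  qed
  ultimately show ?thesis
    by (metis card_seteq)
qed

end
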